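(* Let $l,m,n$ be positive integers with $l\le\min\{m,n\}$, and let $x,y,z$ be complex numbers with $x+y+z=1$. Then $$(-1)^m\sum_{k=0}^m\binom mk\binom{n+k}{l-1}B_{n-l+k+1}(x)E_{m-k}(z)+(-1)^{n-l}\sum_{k=0}^n\binom nk\binom{m+k}{l-1}B_{m-l+k+1}(y)E_{n-k}(z)=-\frac l2\sum_{k=0}^l(-1)^k\binom mk\binom n{l-k}E_{n-l+k}(x)E_{m-k}(y),$$ $$\sum_{k=0}^{l}(-1)^k\binom mk\binom n{l-k}B_{m-k}(x)E_{n-l+k}(z)-(-1)^m\sum_{k=0}^m\binom mk\binom{n+k}{l}B_{m-k}(y)E_{n-l+k}(z)=(-1)^{n-l-1}\frac m2\sum^n_{k=\delta_{l,m}}\binom nk\binom{m+k-1}{l}E_{n-k}(y)E_{m-l-1+k}(x),$$ and $$\frac{(-1)^m}m\sum_{k=0}^m\binom mk\binom{n+k-1}{l-1}B_{n-l+k}(x)B_{m-k}(z)+(-1)^l\frac{(-1)^n}n\sum_{k=0}^n\binom nk\binom{m+k-1}{l-1}B_{m-l+k}(y)B_{n-k}(z)=\frac l{mn}\sum_{k=0}^l(-1)^k\binom mk\binom n{l-k}B_{n-l+k}(x)B_{m-k}(y).$$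
   Context: $\delta_{l,m}$ equals $1$ if $l=m$ and $0$ otherwise. Bernoulli numbers are defined by $B_0=1$ and $\sum_{k=0}^n\binom{n+1}kB_k=0$ for $n\ge1$; Euler numbers by $E_0=1$ and $\sum_{0\le k\le n,\,2\mid n-k}\binom nkE_k=0$ for $n\ge1$. The Bernoulli polynomials are $B_n(x)=\sum_{k=0}^n\binom nkB_kx^{n-k}$ and the Euler polynomials are $E_n(x)=\sum_{k=0}^n\binom nk\frac{E_k}{2^k}(x-\frac12)^{n-k}$. *)

theory Defs
  imports Complex_Main
begin

text \<open>Bernoulli numbers: B_0 = 1 and sum_{k=0}^n C(n+1,k) B_k = 0 for n >= 1.\<close>
fun bern :: "nat \<Rightarrow> complex" where
  "bern n = (if n = 0 then 1
     else - (\<Sum>k<n. of_nat ((n + 1) choose k) * bern k) / of_nat (n + 1))"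

text \<open>Euler numbers: E_0 = 1 and sum over 0<=k<=n, 2 | n-k of C(n,k) E_k = 0 for n >= 1.\<close>
fun eul :: "nat \<Rightarrow> complex" where
  "eul n = (if n = 0 then 1
     else - (\<Sum>k<n. if even (n - k) then of_nat (n choose k) * eul k else 0))"

definition bernpoly :: "nat \<Rightarrow> complex \<Rightarrow> complex" where
  "bernpoly n x = (\<Sum>k\<le>n. of_nat (n choose k) * bern k * x ^ (n - k))"

definition eulpoly :: "nat \<Rightarrow> complex \<Rightarrow> complex" where
  "eulpoly n x = (\<Sum>k\<le>n. of_nat (n choose k) * (eul k / 2 ^ k) * (x - 1/2) ^ (n - k))"

end

theory Submission
  imports Defs "HOL-Computational_Algebra.Formal_Power_Series" "HOL-Computational_Algebra.Polynomial"
begin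

text \<open>Let \<open>\<beta>(x,t) = t e\<^sup>x\<^sup>t / (e\<^sup>t - 1)\<close> and \<open>\<eta>(x,t) = 2 e\<^sup>x\<^sup>t / (e\<^sup>t + 1)\<close> be the exponential
  generating functions of \<open>B\<^sub>n(x)\<close> and \<open>E\<^sub>n(x)\<close>.  For the smallest admissible \<open>l\<close> (\<open>l = 1\<close> in
  the first and third identity, \<open>l = 0\<close> in the second) every sum is, up to factorials, a
  coefficient of a product of two such functions of two variables \<open>s\<close>, \<open>t\<close>, with arguments \<open>s\<close>,
  \<open>t\<close> or \<open>t - s\<close>, e.g. \<open>\<beta>(1 - z, s) \<beta>(x, t - s)\<close>; the reflection \<open>B\<^sub>n(1 - z) = (-1)\<^sup>n B\<^sub>n(z)\<close>
  accounts for the signs.  So these base cases are identities between such products, and after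
  clearing the denominators \<open>e\<^sup>s \<plusminus> 1\<close>, \<open>e\<^sup>t \<plusminus> 1\<close>, \<open>e\<^sup>t\<^sup>-\<^sup>s \<plusminus> 1\<close> they are polynomial identities
  between exponentials, true because \<open>x + y + z = 1\<close>.

  The general case follows by moving along \<open>x + y + z = 1\<close>: substitute \<open>(x + w, y - w, z)\<close> in
  the base cases of the first and third identity and \<open>(x - w, y, z + w)\<close> in that of the second.
  By the addition formula \<open>f\<^sub>N(x + w) = \<Sum>\<^sub>j C(N,j) f\<^sub>N\<^sub>-\<^sub>j(x) w\<^sup>j\<close> both sides are polynomials in
  \<open>w\<close>; in the first and third case the right-hand side is \<open>\<plusminus>d/dw (f\<^sub>n(x + w) f\<^sub>m(y - w))\<close>.
  Comparing the coefficients of \<open>w\<^sup>l\<^sup>-\<^sup>1\<close>, resp. \<open>w\<^sup>l\<close>, gives the identity for \<open>l\<close>.\<close>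

unbundle fps_syntax

section \<open>Exponential generating functions\<close>

declare bern.simps [simp del] eul.simps [simp del]

lemma bern_0 [simp]: "bern 0 = 1"
  by (simp add: bern.simps)

lemma eul_0 [simp]: "eul 0 = 1"
  by (simp add: eul.simps)

lemma bern_recurrence:
  assumes "0 < n"
  shows "(\<Sum>k<Suc n. of_nat (Suc n choose k) * bern k) = 0"
proof -
  have "bern n = - (\<Sum>k<n. of_nat ((n + 1) choose k) * bern k) / of_nat (n + 1)"
    using assms by (subst bern.simps) simp
  then have "of_nat (n + 1) * bern n = - (\<Sum>k<n. of_nat ((n + 1) choose k) * bern k)"
    by (simp add: field_simps del: of_nat_Suc)
  then show ?thesis
    by (simp add: algebra_simps)
qed

lemma eul_recurrence:
  assumes "0 < n"
  shows "(\<Sum>k\<le>n. if even (n - k) then of_nat (n choose k) * eul k else 0) = 0"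
proof -
  have "eul n = - (\<Sum>k<n. if even (n - k) then of_nat (n choose k) * eul k else 0)"
    using assms by (subst eul.simps) simp
  then show ?thesis
    by (simp add: lessThan_Suc_atMost [symmetric])
qed

definition egf :: "(nat \<Rightarrow> complex) \<Rightarrow> complex fps" where
  "egf a = Abs_fps (\<lambda>n. a n / fact n)"

lemma egf_nth [simp]: "egf a $ n = a n / fact n"
  by (simp add: egf_def)

lemma egf_eq_iff: "egf a = egf b \<longleftrightarrow> a = b"
  by (auto simp: fps_eq_iff)

lemma egf_power: "egf (\<lambda>n. c ^ n) = fps_exp c"
  by (simp add: egf_def fps_exp_def)

lemma egf_alternating: "egf (\<lambda>n. (-1) ^ n * a n) = egf a oo - fps_X"
  by (simp add: fps_compose_uminus' egf_def)

lemma egf_binomial_convolution: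
  "egf (\<lambda>n. \<Sum>k\<le>n. of_nat (n choose k) * a k * b (n - k)) = egf a * egf b"
  by (rule fps_ext)
     (simp add: fps_mult_nth atMost_atLeast0 sum_divide_distrib binomial_fact field_simps)

lemma egf_bernpoly: "egf (\<lambda>n. bernpoly n x) = egf bern * fps_exp x"
  unfolding bernpoly_def egf_binomial_convolution egf_power ..

lemma egf_eulpoly: "egf (\<lambda>n. eulpoly n x) = egf (\<lambda>n. eul n / 2 ^ n) * fps_exp (x - 1/2)"
  using egf_binomial_convolution [of "\<lambda>n. eul n / 2 ^ n" "\<lambda>n. (x - 1/2) ^ n"]
  by (simp add: eulpoly_def egf_power)

lemma egf_bern_equation: "(fps_exp 1 - 1) * egf bern = fps_X"
proof (rule fps_ext)
  fix n
  have "((fps_exp 1 - 1) * egf bern) $ n = (egf bern * fps_exp 1) $ n - egf bern $ n"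
    by (simp add: algebra_simps)
  also have "\<dots> = (\<Sum>k\<le>n. bern k / (fact k * fact (n - k))) - bern n / fact n"
    by (simp add: fps_mult_nth atMost_atLeast0)
  also have "\<dots> = (\<Sum>k<n. bern k / (fact k * fact (n - k)))"
    by (simp add: lessThan_Suc_atMost [symmetric])
  also have "\<dots> = (\<Sum>k<n. of_nat (n choose k) * bern k) / fact n"
    by (simp add: sum_divide_distrib binomial_fact field_simps)
  also have "\<dots> = fps_X $ n"
  proof (cases "n \<le> 1")
    case True
    then show ?thesis
      by (cases n) auto
  next
    case False
    then obtain n' where "n = Suc n'" "0 < n'"
      by (cases n) auto
    then show ?thesis
      using bern_recurrence [of n'] by simp
  qed
  finally show "((fps_exp 1 - 1) * egf bern) $ n = fps_X $ n" .
qed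

lemma egf_eul_equation: "egf (\<lambda>n. eul n / 2 ^ n) * (fps_exp (1/2) + fps_exp (-1/2)) = 2"
proof (rule fps_ext)
  fix n
  have "(egf (\<lambda>n. eul n / 2 ^ n) * (fps_exp (1/2) + fps_exp (-1/2))) $ n
      = (\<Sum>k\<le>n. eul k / (2 ^ k * fact k) * (((1/2) ^ (n - k) + (-1/2) ^ (n - k)) / fact (n - k)))"
    by (simp add: fps_mult_nth atMost_atLeast0 add_divide_distrib)
  also have "\<dots> = (\<Sum>k\<le>n. if even (n - k) then of_nat (n choose k) * eul k else 0) * (2 / (2 ^ n * fact n))"
    unfolding sum_distrib_right
  proof (rule sum.cong [OF refl])
    fix k
    assume "k \<in> {..n}"
    then have "(2::complex) ^ n = 2 ^ k * 2 ^ (n - k)"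
      by (simp add: power_add [symmetric])
    then show "eul k / (2 ^ k * fact k) * (((1/2) ^ (n - k) + (-1/2) ^ (n - k)) / fact (n - k))
        = (if even (n - k) then of_nat (n choose k) * eul k else 0) * (2 / (2 ^ n * fact n))"
      using \<open>k \<in> {..n}\<close>
      by (cases "even (n - k)")
         (simp_all add: binomial_fact power_minus_even power_minus_odd field_simps power_divide)
  qed
  also have "\<dots> = (2 :: complex fps) $ n"
    using eul_recurrence [of n] by (cases n) (simp_all add: numeral_fps_const)
  finally show "(egf (\<lambda>n. eul n / 2 ^ n) * (fps_exp (1/2) + fps_exp (-1/2))) $ n = (2 :: complex fps) $ n" .
qed

lemma bernpoly_egf_equation: "(fps_exp 1 - 1) * egf (\<lambda>n. bernpoly n x) = fps_X * fps_exp x"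
  by (simp add: egf_bernpoly egf_bern_equation mult.assoc [symmetric])

lemma eulpoly_egf_equation: "(fps_exp 1 + 1) * egf (\<lambda>n. eulpoly n x) = 2 * fps_exp x"
proof -
  have "(fps_exp 1 + 1) * egf (\<lambda>n. eulpoly n x)
      = egf (\<lambda>n. eul n / 2 ^ n) * ((fps_exp 1 + 1) * fps_exp (x - 1/2))"
    by (simp only: egf_eulpoly mult_ac)
  also have "(fps_exp 1 + 1) * fps_exp (x - 1/2) = (fps_exp (1/2) + fps_exp (-1/2)) * fps_exp x"
    by (simp add: algebra_simps fps_exp_add_mult [symmetric])
  also have "egf (\<lambda>n. eul n / 2 ^ n) * (\<dots>) = 2 * fps_exp x"
    by (simp only: mult.assoc [symmetric] egf_eul_equation)
  finally show ?thesis .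
qed

lemma egf_bernpoly_shift: "egf (\<lambda>n. bernpoly n (x + w)) = fps_exp w * egf (\<lambda>n. bernpoly n x)"
  by (simp add: egf_bernpoly fps_exp_add_mult mult_ac)

lemma egf_eulpoly_shift: "egf (\<lambda>n. eulpoly n (x + w)) = fps_exp w * egf (\<lambda>n. eulpoly n x)"
proof -
  have "x + w - 1/2 = w + (x - 1/2)"
    by simp
  then show ?thesis
    by (simp only: egf_eulpoly fps_exp_add_mult mult_ac)
qed

lemma fps_exp_1_minus_1_nonzero: "fps_exp (1::complex) - 1 \<noteq> 0"
proof
  assume "fps_exp (1::complex) - 1 = 0"
  then have "(fps_exp (1::complex) - 1) $ 1 = 0"
    by simp
  then show False
    by simp
qed

lemma fps_exp_plus_1_nonzero: "fps_exp (c::complex) + 1 \<noteq> 0"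
proof
  assume "fps_exp c + 1 = 0"
  then have "(fps_exp c + 1) $ 0 = 0"
    by simp
  then show False
    by simp
qed

lemma egf_reflect:
  fixes D N :: "complex fps" and \<epsilon> :: complex
  assumes equation: "\<And>x. D * egf (\<lambda>n. f n x) = N * fps_exp x"
    and "D \<noteq> 0" "\<epsilon> \<noteq> 0"
    and D_reflect: "(D oo - fps_X) * fps_exp 1 = fps_const \<epsilon> * D"
    and N_reflect: "N oo - fps_X = fps_const \<epsilon> * N"
  shows "f n (1 - x) = (-1) ^ n * f n x"
proof -
  let ?F = "egf (\<lambda>n. f n x) oo - fps_X"
  have reflected: "(D oo - fps_X) * ?F = (N oo - fps_X) * fps_exp (- x)"
    using arg_cong [OF equation, of "\<lambda>g. g oo - fps_X"]
    by (simp add: fps_compose_mult_distrib)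
  have "fps_const \<epsilon> * (D * ?F) = ((D oo - fps_X) * fps_exp 1) * ?F"
    by (simp only: D_reflect mult.assoc)
  also have "\<dots> = (D oo - fps_X) * ?F * fps_exp 1"
    by (simp only: mult_ac)
  also have "\<dots> = fps_const \<epsilon> * (N * fps_exp (1 - x))"
    by (simp add: reflected N_reflect mult_ac flip: fps_exp_add_mult)
  also have "N * fps_exp (1 - x) = D * egf (\<lambda>n. f n (1 - x))"
    by (rule equation [symmetric])
  finally have "D * (egf (\<lambda>n. f n x) oo - fps_X) = D * egf (\<lambda>n. f n (1 - x))"
    using \<open>\<epsilon> \<noteq> 0\<close> by simp
  then have "egf (\<lambda>n. (-1) ^ n * f n x) = egf (\<lambda>n. f n (1 - x))"
    using \<open>D \<noteq> 0\<close> by (simp add: egf_alternating)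
  then show ?thesis
    by (simp add: egf_eq_iff fun_eq_iff)
qed

lemma bernpoly_reflect: "bernpoly n (1 - x) = (-1) ^ n * bernpoly n x"
proof (rule egf_reflect [OF bernpoly_egf_equation fps_exp_1_minus_1_nonzero, of "-1"])
  show "((fps_exp 1 - 1) oo - fps_X) * fps_exp 1 = fps_const (-1) * (fps_exp 1 - 1 :: complex fps)"
    by (simp only: fps_compose_sub_distrib fps_fps_exp_compose_minus fps_compose_1)
       (simp add: algebra_simps fps_exp_add_mult [symmetric] fps_const_neg [symmetric])
qed (simp_all add: fps_const_neg [symmetric])

lemma eulpoly_reflect: "eulpoly n (1 - x) = (-1) ^ n * eulpoly n x"
proof (rule egf_reflect [OF eulpoly_egf_equation fps_exp_plus_1_nonzero, of 1])
  show "((fps_exp 1 + 1) oo - fps_X) * fps_exp 1 = fps_const 1 * (fps_exp 1 + 1 :: complex fps)"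
    by (simp only: fps_compose_add_distrib fps_fps_exp_compose_minus fps_compose_1)
       (simp add: algebra_simps fps_exp_add_mult [symmetric])
qed (simp_all add: numeral_fps_const)

lemma fps_nth_deriv_mult:
  fixes f g :: "'a::comm_ring_1 fps"
  shows "fps_nth_deriv n (f * g) = (\<Sum>k\<le>n. of_nat (n choose k) * (fps_nth_deriv k f * fps_nth_deriv (n - k) g))"
proof (induction n)
  case 0
  then show ?case
    by simp
next
  case (Suc n)
  define a where "a k = fps_nth_deriv k f * fps_nth_deriv (Suc n - k) g" for k
  have "fps_nth_deriv (Suc n) (f * g)
      = (\<Sum>k\<le>n. of_nat (n choose k) * a (Suc k)) + (\<Sum>k\<le>n. of_nat (n choose k) * a k)"
    unfolding fps_nth_deriv_commute Suc fps_deriv_sum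
    by (simp add: fps_nth_deriv_commute algebra_simps sum.distrib a_def Suc_diff_le
        del: fps_nth_deriv.simps(2))
  also have "\<dots> = (\<Sum>k\<le>n. of_nat (n choose k) * a (Suc k)) + (\<Sum>k\<le>Suc n. of_nat (n choose k) * a k)"
    by (simp add: binomial_eq_0)
  also have "\<dots> = (\<Sum>k\<le>Suc n. of_nat (Suc n choose k) * a k)"
    by (simp only: sum.atMost_Suc_shift) (simp add: sum.distrib algebra_simps)
  finally show ?case
    by (simp add: a_def)
qed

lemma fps_nth_deriv_egf: "fps_nth_deriv k (egf a) = egf (\<lambda>n. a (n + k))"
proof (induction k)
  case (Suc k)
  have "fps_deriv (egf (\<lambda>n. a (n + k))) = egf (\<lambda>n. a (n + Suc k))"
    by (rule fps_ext) (simp add: fact_Suc del: of_nat_Suc)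
  then show ?case
    using Suc by (simp add: fps_nth_deriv_commute del: fps_nth_deriv.simps(2))
qed simp

section \<open>Bivariate generating functions\<close>

text \<open>A bivariate series is a series in an outer variable \<open>s\<close> whose coefficients are series in
  an inner variable \<open>t\<close>.  For \<open>f = f(t)\<close>, the series \<open>f(t)\<close>, \<open>f(s)\<close> and \<open>f(t - s)\<close> are
  \<open>fps_const f\<close>, \<open>fps_outer f\<close> and \<open>fps_diff_arg f\<close>; the last is the Taylor expansion of \<open>f\<close>
  at \<open>t\<close> in powers of \<open>-s\<close>.\<close>

definition fps_outer :: "complex fps \<Rightarrow> complex fps fps" where
  "fps_outer f = Abs_fps (\<lambda>m. fps_const (f $ m))"

definition fps_diff_arg :: "complex fps \<Rightarrow> complex fps fps" where
  "fps_diff_arg f = Abs_fps (\<lambda>m. fps_const ((-1) ^ m / fact m) * fps_nth_deriv m f)"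

lemma fps_outer_nth [simp]: "fps_outer f $ m = fps_const (f $ m)"
  by (simp add: fps_outer_def)

lemma fps_diff_arg_nth [simp]: "fps_diff_arg f $ m = fps_const ((-1) ^ m / fact m) * fps_nth_deriv m f"
  by (simp add: fps_diff_arg_def)

lemma fps_outer_const [simp]: "fps_outer (fps_const c) = fps_const (fps_const c)"
  by (rule fps_ext) simp

lemma fps_outer_1 [simp]: "fps_outer 1 = 1"
  using fps_outer_const [of 1] by simp

lemma fps_outer_numeral [simp]: "fps_outer (numeral k) = numeral k"
  using fps_outer_const [of "numeral k"] by (simp add: numeral_fps_const)

lemma fps_outer_X [simp]: "fps_outer fps_X = fps_X"
  by (rule fps_ext) simp

lemma fps_outer_add [simp]: "fps_outer (f + g) = fps_outer f + fps_outer g"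
  by (rule fps_ext) simp

lemma fps_outer_diff [simp]: "fps_outer (f - g) = fps_outer f - fps_outer g"
  by (rule fps_ext) simp

lemma fps_const_sum: "fps_const (sum f A) = (\<Sum>x\<in>A. fps_const (f x))"
  by (induction A rule: infinite_finite_induct) (simp_all flip: fps_const_add)

lemma fps_outer_mult [simp]: "fps_outer (f * g) = fps_outer f * fps_outer g"
  by (rule fps_ext) (simp add: fps_mult_nth fps_const_sum fps_const_mult [symmetric] del: fps_const_mult)

lemma fps_outer_eq_0_iff [simp]: "fps_outer f = 0 \<longleftrightarrow> f = 0"
  by (simp add: fps_eq_iff)

lemma fps_diff_arg_const [simp]: "fps_diff_arg (fps_const c) = fps_const (fps_const c)"
  by (rule fps_ext) simp

lemma fps_diff_arg_1 [simp]: "fps_diff_arg 1 = 1"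
  using fps_diff_arg_const [of 1] by simp

lemma fps_diff_arg_numeral [simp]: "fps_diff_arg (numeral k) = numeral k"
  using fps_diff_arg_const [of "numeral k"] by (simp add: numeral_fps_const)

lemma fps_diff_arg_X [simp]: "fps_diff_arg fps_X = fps_const fps_X - fps_X"
proof (rule fps_ext)
  fix m
  show "fps_diff_arg fps_X $ m = (fps_const fps_X - fps_X) $ m"
    by (cases m) (auto simp flip: fps_const_neg)
qed

lemma fps_diff_arg_add [simp]: "fps_diff_arg (f + g) = fps_diff_arg f + fps_diff_arg g"
  by (rule fps_ext) (simp add: algebra_simps)

lemma fps_diff_arg_diff [simp]: "fps_diff_arg (f - g) = fps_diff_arg f - fps_diff_arg g"
  by (rule fps_ext) (simp add: algebra_simps)

lemma fps_diff_arg_mult [simp]: "fps_diff_arg (f * g) = fps_diff_arg f * fps_diff_arg g"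
proof (rule fps_ext)
  fix m
  have "fps_diff_arg (f * g) $ m
      = (\<Sum>k\<le>m. fps_const ((-1) ^ m / fact m * of_nat (m choose k)) * (fps_nth_deriv k f * fps_nth_deriv (m - k) g))"
    unfolding fps_diff_arg_nth fps_nth_deriv_mult sum_distrib_left
    by (simp only: mult.assoc [symmetric] fps_const_mult flip: fps_of_nat)
  also have "\<dots> = (\<Sum>k\<le>m. fps_const ((-1) ^ k / fact k) * fps_nth_deriv k f
      * (fps_const ((-1) ^ (m - k) / fact (m - k)) * fps_nth_deriv (m - k) g))"
  proof (rule sum.cong [OF refl])
    fix k
    assume "k \<in> {..m}"
    then have "(-1::complex) ^ m / fact m * of_nat (m choose k) = (-1) ^ k / fact k * ((-1) ^ (m - k) / fact (m - k))"
      by (simp add: binomial_fact power_add [symmetric] field_simps)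
    then have "fps_const ((-1) ^ m / fact m * of_nat (m choose k))
        = fps_const ((-1) ^ k / fact k) * fps_const ((-1) ^ (m - k) / fact (m - k) :: complex)"
      by simp
    then show "fps_const ((-1) ^ m / fact m * of_nat (m choose k)) * (fps_nth_deriv k f * fps_nth_deriv (m - k) g)
        = fps_const ((-1) ^ k / fact k) * fps_nth_deriv k f * (fps_const ((-1) ^ (m - k) / fact (m - k)) * fps_nth_deriv (m - k) g)"
      by (simp only: mult_ac)
  qed
  also have "\<dots> = (fps_diff_arg f * fps_diff_arg g) $ m"
    by (simp add: fps_mult_nth atMost_atLeast0)
  finally show "fps_diff_arg (f * g) $ m = (fps_diff_arg f * fps_diff_arg g) $ m" .
qed

lemma fps_diff_arg_exp: "fps_diff_arg (fps_exp c) = fps_outer (fps_exp (- c)) * fps_const (fps_exp c)"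
  by (rule fps_ext) (simp add: power_minus' mult.assoc)

lemma fps_diff_arg_eq_0_iff [simp]: "fps_diff_arg f = 0 \<longleftrightarrow> f = 0"
proof
  assume "fps_diff_arg f = 0"
  then have "fps_diff_arg f $ 0 = 0"
    by simp
  then show "f = 0"
    by simp
qed (use fps_diff_arg_const [of 0] in simp)

definition egf2_coeff :: "complex fps fps \<Rightarrow> nat \<Rightarrow> nat \<Rightarrow> complex" where
  "egf2_coeff F m n = fact m * fact n * F $ m $ n"

lemma egf2_coeff_diff [simp]: "egf2_coeff (F - G) m n = egf2_coeff F m n - egf2_coeff G m n"
  by (simp add: egf2_coeff_def algebra_simps)

lemma egf2_coeff_minus [simp]: "egf2_coeff (- F) m n = - egf2_coeff F m n"
  by (simp add: egf2_coeff_def)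

lemma egf2_coeff_2 [simp]: "egf2_coeff (2 * F) m n = 2 * egf2_coeff F m n"
  by (simp add: egf2_coeff_def numeral_fps_const)

lemma egf2_coeff_outer_X [simp]: "egf2_coeff (fps_X * F) m n = of_nat m * egf2_coeff F (m - 1) n"
  by (cases m) (simp_all add: egf2_coeff_def)

lemma egf2_coeff_inner_X [simp]: "egf2_coeff (fps_const fps_X * F) m n = of_nat n * egf2_coeff F m (n - 1)"
  by (cases n) (simp_all add: egf2_coeff_def)

lemma egf2_coeff_outer_inner:
  "egf2_coeff (fps_outer (egf a) * fps_const (egf b)) m n = a m * b n"
  by (simp add: egf2_coeff_def fps_mult_right_const_nth)

lemma egf2_coeff_outer_diff_arg:
  "egf2_coeff (fps_outer (egf (\<lambda>i. (-1) ^ i * a i)) * fps_diff_arg (egf b)) m n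
    = (-1) ^ m * (\<Sum>k=0..m. of_nat (m choose k) * a (m - k) * b (n + k))"
proof -
  have "(fps_outer (egf (\<lambda>i. (-1) ^ i * a i)) * fps_diff_arg (egf b)) $ m $ n
      = (\<Sum>i=0..m. (-1) ^ i * a i / fact i * ((-1) ^ (m - i) / fact (m - i) * (b (n + (m - i)) / fact n)))"
    unfolding fps_mult_nth [of "fps_outer _"] fps_sum_nth by (simp add: fps_nth_deriv_egf)
  then have "egf2_coeff (fps_outer (egf (\<lambda>i. (-1) ^ i * a i)) * fps_diff_arg (egf b)) m n
      = (\<Sum>i=0..m. fact m / (fact i * fact (m - i)) * ((-1) ^ i * (-1) ^ (m - i)) * a i * b (n + (m - i)))"
    by (simp add: egf2_coeff_def sum_distrib_left field_simps)
  also have "\<dots> = (-1) ^ m * (\<Sum>i=0..m. of_nat (m choose i) * a i * b (n + (m - i)))"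
    by (simp add: sum_distrib_left binomial_fact power_add [symmetric] mult_ac)
  also have "(\<Sum>i=0..m. of_nat (m choose i) * a i * b (n + (m - i))) = (\<Sum>k=0..m. of_nat (m choose k) * a (m - k) * b (n + k))"
    by (subst sum.atLeastAtMost_rev [of _ 0 m, simplified]) (simp add: binomial_symmetric [symmetric])
  finally show ?thesis .
qed

lemma egf2_coeff_inner_diff_arg:
  "egf2_coeff (fps_const (egf (\<lambda>i. (-1) ^ i * a i)) * fps_diff_arg (egf (\<lambda>i. (-1) ^ i * b i))) m n
    = (-1) ^ n * (\<Sum>k=0..n. of_nat (n choose k) * a (n - k) * b (m + k))"
proof -
  have "(fps_const (egf (\<lambda>i. (-1) ^ i * a i)) * fps_diff_arg (egf (\<lambda>i. (-1) ^ i * b i))) $ m $ n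
      = (\<Sum>j=0..n. (-1) ^ j * a j / fact j * ((-1) ^ m / fact m * ((-1) ^ (n - j + m) * b (n - j + m) / fact (n - j))))"
    by (simp add: fps_mult_nth [of "egf _"] fps_nth_deriv_egf)
  then have "egf2_coeff (fps_const (egf (\<lambda>i. (-1) ^ i * a i)) * fps_diff_arg (egf (\<lambda>i. (-1) ^ i * b i))) m n
      = (\<Sum>j=0..n. fact n / (fact j * fact (n - j)) * ((-1) ^ j * (-1) ^ m * (-1) ^ (n - j + m)) * a j * b (n - j + m))"
    by (simp add: egf2_coeff_def sum_distrib_left field_simps)
  also have "\<dots> = (-1) ^ n * (\<Sum>j=0..n. of_nat (n choose j) * a j * b (n - j + m))"
  proof -
    have "(-1::complex) ^ j * (-1) ^ m * (-1) ^ (n - j + m) = (-1) ^ n" if "j \<le> n" for j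
      using that by (auto simp: minus_one_power_iff)
    then show ?thesis
      by (simp add: sum_distrib_left binomial_fact mult_ac)
  qed
  also have "(\<Sum>j=0..n. of_nat (n choose j) * a j * b (n - j + m)) = (\<Sum>k=0..n. of_nat (n choose k) * a (n - k) * b (m + k))"
    by (subst sum.atLeastAtMost_rev [of _ 0 n, simplified]) (simp add: binomial_symmetric [symmetric] add.commute)
  finally show ?thesis .
qed

lemma bernpoly_egf2_equations:
  "(fps_outer (fps_exp 1) - 1) * fps_outer (egf (\<lambda>n. bernpoly n x)) = fps_X * fps_outer (fps_exp x)"
  "(fps_const (fps_exp 1) - 1) * fps_const (egf (\<lambda>n. bernpoly n x)) = fps_const fps_X * fps_const (fps_exp x)"
  "(fps_outer (fps_exp (-1)) * fps_const (fps_exp 1) - 1) * fps_diff_arg (egf (\<lambda>n. bernpoly n x))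
     = (fps_const fps_X - fps_X) * (fps_outer (fps_exp (- x)) * fps_const (fps_exp x))"
  using arg_cong [OF bernpoly_egf_equation, of fps_outer x] arg_cong [OF bernpoly_egf_equation, of fps_const x]
    arg_cong [OF bernpoly_egf_equation, of fps_diff_arg x]
  by (simp_all add: fps_diff_arg_exp flip: fps_const_mult fps_const_sub)

lemma eulpoly_egf2_equations:
  "(fps_outer (fps_exp 1) + 1) * fps_outer (egf (\<lambda>n. eulpoly n x)) = 2 * fps_outer (fps_exp x)"
  "(fps_const (fps_exp 1) + 1) * fps_const (egf (\<lambda>n. eulpoly n x)) = 2 * fps_const (fps_exp x)"
  "(fps_outer (fps_exp (-1)) * fps_const (fps_exp 1) + 1) * fps_diff_arg (egf (\<lambda>n. eulpoly n x))
     = 2 * (fps_outer (fps_exp (- x)) * fps_const (fps_exp x))"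
  using arg_cong [OF eulpoly_egf_equation, of fps_outer x] arg_cong [OF eulpoly_egf_equation, of fps_const x]
    arg_cong [OF eulpoly_egf_equation, of fps_diff_arg x]
  by (simp_all add: fps_diff_arg_exp numeral_fps_const flip: fps_const_mult fps_const_add)

text \<open>In the next three lemmas \<open>s\<close>, \<open>t\<close> are the two variables, \<open>Sc\<close>, \<open>Tc\<close> stand for \<open>e\<^sup>c\<^sup>s\<close>, \<open>e\<^sup>c\<^sup>t\<close>
  (\<open>m\<close> = minus, \<open>1z\<close> = \<open>1 - z\<close>), and \<open>SFp\<close>, \<open>TFp\<close>, \<open>UFp\<close> for the generating function of
  \<open>F\<^sub>n(p)\<close> in the variable \<open>s\<close>, \<open>t\<close>, \<open>t - s\<close>.  Each identity is polynomial once the three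
  denominators are cleared.\<close>

lemma egf2_bernpoly_eulpoly_algebra1:
  fixes s t S1 Sm1 Sx Sy Smx S1z Sm1y T1 Tx T1y T1z SEy SE1z TEx TE1z UBx UB1y :: "'a::idom"
  assumes "(S1 + 1) * SE1z = 2 * S1z" "(S1 + 1) * SEy = 2 * Sy"
    "(T1 + 1) * TE1z = 2 * T1z" "(T1 + 1) * TEx = 2 * Tx"
    "(Sm1 * T1 - 1) * UBx = (t - s) * (Smx * Tx)" "(Sm1 * T1 - 1) * UB1y = (t - s) * (Sm1y * T1y)"
    "S1z = Sx * Sy" "Sm1y = Sy * Sm1" "T1y * T1z = T1 * Tx" "Smx * Sx = 1" "Sm1 * S1 = 1"
    "S1 + 1 \<noteq> 0" "T1 + 1 \<noteq> 0" "Sm1 * T1 - 1 \<noteq> 0"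
  shows "2 * (SE1z * UBx - TE1z * UB1y) = (s - t) * (SEy * TEx)"
proof -
  have "2 * (SE1z * UBx - TE1z * UB1y) * ((S1 + 1) * (T1 + 1) * (Sm1 * T1 - 1))
      = (s - t) * (SEy * TEx) * ((S1 + 1) * (T1 + 1) * (Sm1 * T1 - 1))"
    using assms(1-11) by algebra
  with assms(12-14) show ?thesis
    by simp
qed

lemma egf2_bernpoly_eulpoly_algebra2:
  fixes s S1 Sm1 Sx Sz Smz S1y Sm1x T1 Tz T1x T1y SBx SB1y TEz TE1y UEz UE1x :: "'a::idom"
  assumes "(S1 - 1) * SBx = s * Sx" "(S1 - 1) * SB1y = s * S1y"
    "(T1 + 1) * TEz = 2 * Tz" "(T1 + 1) * TE1y = 2 * T1y"
    "(Sm1 * T1 + 1) * UEz = 2 * (Smz * Tz)" "(Sm1 * T1 + 1) * UE1x = 2 * (Sm1x * T1x)"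
    "S1y = Sx * Sz" "Sm1x = Sx * Sm1" "T1y * T1x = T1 * Tz" "Smz * Sz = 1" "Sm1 * S1 = 1"
    "S1 - 1 \<noteq> 0" "T1 + 1 \<noteq> 0" "Sm1 * T1 + 1 \<noteq> 0"
  shows "2 * (SBx * TEz - SB1y * UEz) = - (s * (TE1y * UE1x))"
proof -
  have "(2 * (SBx * TEz - SB1y * UEz) + s * (TE1y * UE1x)) * ((S1 - 1) * (T1 + 1) * (Sm1 * T1 + 1)) = 0"
    using assms(1-11) by algebra
  with assms(12-14) show ?thesis
    by (simp add: eq_neg_iff_add_eq_0)
qed

lemma egf2_bernpoly_bernpoly_algebra:
  fixes s t S1 Sm1 Sx Sy Smx S1z Sm1y T1 Tx T1y T1z SBy SB1z TBx TB1z UBx UB1y :: "'a::idom"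
  assumes "(S1 - 1) * SB1z = s * S1z" "(S1 - 1) * SBy = s * Sy"
    "(T1 - 1) * TB1z = t * T1z" "(T1 - 1) * TBx = t * Tx"
    "(Sm1 * T1 - 1) * UBx = (t - s) * (Smx * Tx)" "(Sm1 * T1 - 1) * UB1y = (t - s) * (Sm1y * T1y)"
    "S1z = Sx * Sy" "Sm1y = Sy * Sm1" "T1y * T1z = T1 * Tx" "Smx * Sx = 1" "Sm1 * S1 = 1"
    "S1 - 1 \<noteq> 0" "T1 - 1 \<noteq> 0" "Sm1 * T1 - 1 \<noteq> 0"
  shows "t * (SB1z * UBx) - s * (TB1z * UB1y) = (t - s) * (SBy * TBx)"
proof -
  have "(t * (SB1z * UBx) - s * (TB1z * UB1y)) * ((S1 - 1) * (T1 - 1) * (Sm1 * T1 - 1))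
      = (t - s) * (SBy * TBx) * ((S1 - 1) * (T1 - 1) * (Sm1 * T1 - 1))"
    using assms(1-11) by algebra
  with assms(12-14) show ?thesis
    by simp
qed

lemma egf2_exp_relations:
  assumes "x + y + z = 1"
  shows "fps_outer (fps_exp (1 - z)) = fps_outer (fps_exp x) * fps_outer (fps_exp y)"
    "fps_outer (fps_exp (- (1 - y))) = fps_outer (fps_exp y) * fps_outer (fps_exp (-1))"
    "fps_const (fps_exp (1 - y)) * fps_const (fps_exp (1 - z)) = fps_const (fps_exp 1) * fps_const (fps_exp x)"
proof -
  have "1 - z = x + y" "- (1 - y) = y + (-1)" "(1 - y) + (1 - z) = 1 + x"
    using assms by (simp_all add: algebra_simps)
  then show "fps_outer (fps_exp (1 - z)) = fps_outer (fps_exp x) * fps_outer (fps_exp y)"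
    "fps_outer (fps_exp (- (1 - y))) = fps_outer (fps_exp y) * fps_outer (fps_exp (-1))"
    "fps_const (fps_exp (1 - y)) * fps_const (fps_exp (1 - z)) = fps_const (fps_exp 1) * fps_const (fps_exp x)"
    unfolding fps_const_mult fps_exp_add_mult [symmetric] fps_outer_mult [symmetric]
    by simp_all
qed

lemma fps_outer_exp_inverse: "fps_outer (fps_exp (- c)) * fps_outer (fps_exp c) = 1"
  by (simp flip: fps_outer_mult fps_exp_add_mult)

lemma egf2_denominators_nonzero:
  "fps_outer (fps_exp 1) - 1 \<noteq> 0" "fps_const (fps_exp 1) - 1 \<noteq> (0 :: complex fps fps)"
  "fps_outer (fps_exp (-1)) * fps_const (fps_exp 1) - 1 \<noteq> 0"
  "fps_outer (fps_exp 1) + 1 \<noteq> 0" "fps_const (fps_exp 1) + 1 \<noteq> (0 :: complex fps fps)"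
  "fps_outer (fps_exp (-1)) * fps_const (fps_exp 1) + 1 \<noteq> 0"
proof -
  have "fps_outer (fps_exp 1 - 1) \<noteq> 0" "fps_const (fps_exp 1 - 1) \<noteq> (0 :: complex fps fps)"
    "fps_diff_arg (fps_exp 1 - 1) \<noteq> 0"
    using fps_exp_1_minus_1_nonzero
    by (simp_all only: fps_outer_eq_0_iff fps_diff_arg_eq_0_iff fps_const_eq_0_iff not_False_eq_True)
  then show "fps_outer (fps_exp 1) - 1 \<noteq> 0" "fps_const (fps_exp 1) - 1 \<noteq> (0 :: complex fps fps)"
    "fps_outer (fps_exp (-1)) * fps_const (fps_exp 1) - 1 \<noteq> 0"
    by (simp_all only: fps_outer_diff fps_outer_1 fps_diff_arg_diff fps_diff_arg_1 fps_diff_arg_exp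
        fps_const_1_eq_1 fps_const_sub [symmetric] not_False_eq_True)
  have "fps_outer (fps_exp 1 + 1) \<noteq> 0" "fps_const (fps_exp 1 + 1) \<noteq> (0 :: complex fps fps)"
    "fps_diff_arg (fps_exp 1 + 1) \<noteq> 0"
    using fps_exp_plus_1_nonzero [of 1]
    by (simp_all only: fps_outer_eq_0_iff fps_diff_arg_eq_0_iff fps_const_eq_0_iff not_False_eq_True)
  then show "fps_outer (fps_exp 1) + 1 \<noteq> 0" "fps_const (fps_exp 1) + 1 \<noteq> (0 :: complex fps fps)"
    "fps_outer (fps_exp (-1)) * fps_const (fps_exp 1) + 1 \<noteq> 0"
    by (simp_all only: fps_outer_add fps_outer_1 fps_diff_arg_add fps_diff_arg_1 fps_diff_arg_exp
        fps_const_1_eq_1 fps_const_add [symmetric] not_False_eq_True)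
qed

lemma bernpoly_eulpoly_egf2_identity1:
  assumes "x + y + z = 1"
  shows "2 * (fps_outer (egf (\<lambda>n. eulpoly n (1 - z))) * fps_diff_arg (egf (\<lambda>n. bernpoly n x))
      - fps_const (egf (\<lambda>n. eulpoly n (1 - z))) * fps_diff_arg (egf (\<lambda>n. bernpoly n (1 - y))))
    = (fps_X - fps_const fps_X) * (fps_outer (egf (\<lambda>n. eulpoly n y)) * fps_const (egf (\<lambda>n. eulpoly n x)))"
  by (rule egf2_bernpoly_eulpoly_algebra1
      [OF eulpoly_egf2_equations(1) [of "1 - z"] eulpoly_egf2_equations(1) [of y]
        eulpoly_egf2_equations(2) [of "1 - z"] eulpoly_egf2_equations(2) [of x]
        bernpoly_egf2_equations(3) [of x] bernpoly_egf2_equations(3) [of "1 - y"]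
        egf2_exp_relations [OF assms] fps_outer_exp_inverse fps_outer_exp_inverse egf2_denominators_nonzero(4,5,3)])

lemma bernpoly_eulpoly_egf2_identity2:
  assumes "x + y + z = 1"
  shows "2 * (fps_outer (egf (\<lambda>n. bernpoly n x)) * fps_const (egf (\<lambda>n. eulpoly n z))
      - fps_outer (egf (\<lambda>n. bernpoly n (1 - y))) * fps_diff_arg (egf (\<lambda>n. eulpoly n z)))
    = - (fps_X * (fps_const (egf (\<lambda>n. eulpoly n (1 - y))) * fps_diff_arg (egf (\<lambda>n. eulpoly n (1 - x)))))"
proof -
  have "x + z + y = 1" "z + x + y = 1" "z + y + x = 1"
    using assms by (simp_all add: ac_simps)
  show ?thesis
    by (rule egf2_bernpoly_eulpoly_algebra2
        [OF bernpoly_egf2_equations(1) [of x] bernpoly_egf2_equations(1) [of "1 - y"]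
          eulpoly_egf2_equations(2) [of z] eulpoly_egf2_equations(2) [of "1 - y"]
          eulpoly_egf2_equations(3) [of z] eulpoly_egf2_equations(3) [of "1 - x"]
          egf2_exp_relations(1) [OF \<open>x + z + y = 1\<close>] egf2_exp_relations(2) [OF \<open>z + x + y = 1\<close>]
          egf2_exp_relations(3) [OF \<open>z + y + x = 1\<close>] fps_outer_exp_inverse fps_outer_exp_inverse
          egf2_denominators_nonzero(1,5,6)])
qed

lemma bernpoly_bernpoly_egf2_identity:
  assumes "x + y + z = 1"
  shows "fps_const fps_X * (fps_outer (egf (\<lambda>n. bernpoly n (1 - z))) * fps_diff_arg (egf (\<lambda>n. bernpoly n x)))
      - fps_X * (fps_const (egf (\<lambda>n. bernpoly n (1 - z))) * fps_diff_arg (egf (\<lambda>n. bernpoly n (1 - y))))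
    = (fps_const fps_X - fps_X) * (fps_outer (egf (\<lambda>n. bernpoly n y)) * fps_const (egf (\<lambda>n. bernpoly n x)))"
  by (rule egf2_bernpoly_bernpoly_algebra
      [OF bernpoly_egf2_equations(1) [of "1 - z"] bernpoly_egf2_equations(1) [of y]
        bernpoly_egf2_equations(2) [of "1 - z"] bernpoly_egf2_equations(2) [of x]
        bernpoly_egf2_equations(3) [of x] bernpoly_egf2_equations(3) [of "1 - y"]
        egf2_exp_relations [OF assms] fps_outer_exp_inverse fps_outer_exp_inverse egf2_denominators_nonzero(1-3)])

lemmas egf2_coeff_simps = egf2_coeff_diff egf2_coeff_minus egf2_coeff_2 egf2_coeff_outer_X egf2_coeff_inner_X
  egf2_coeff_outer_inner egf2_coeff_outer_diff_arg egf2_coeff_inner_diff_arg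

lemma bernpoly_eulpoly_sum_identity1_base:
  assumes "x + y + z = 1"
  shows "2 * ((-1) ^ m * (\<Sum>k=0..m. of_nat (m choose k) * bernpoly (n + k) x * eulpoly (m - k) z)
      - (-1) ^ n * (\<Sum>k=0..n. of_nat (n choose k) * bernpoly (m + k) y * eulpoly (n - k) z))
    = of_nat m * eulpoly n x * eulpoly (m - 1) y - of_nat n * eulpoly (n - 1) x * eulpoly m y"
  using arg_cong [OF bernpoly_eulpoly_egf2_identity1 [OF assms], of "\<lambda>F. egf2_coeff F m n"]
  by (simp only: egf2_coeff_simps left_diff_distrib bernpoly_reflect eulpoly_reflect) (simp add: mult_ac)

lemma bernpoly_eulpoly_sum_identity2_base:
  assumes "x + y + z = 1"
  shows "2 * (bernpoly m x * eulpoly n z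
      - (-1) ^ m * (\<Sum>k=0..m. of_nat (m choose k) * bernpoly (m - k) y * eulpoly (n + k) z))
    = - ((-1) ^ n * of_nat m * (\<Sum>k=0..n. of_nat (n choose k) * eulpoly (n - k) y * eulpoly (m - 1 + k) x))"
  using arg_cong [OF bernpoly_eulpoly_egf2_identity2 [OF assms], of "\<lambda>F. egf2_coeff F m n"]
  by (simp only: egf2_coeff_simps left_diff_distrib bernpoly_reflect eulpoly_reflect) (simp add: mult_ac)

lemma bernpoly_bernpoly_sum_identity_base:
  assumes "x + y + z = 1"
  shows "of_nat n * (-1) ^ m * (\<Sum>k=0..m. of_nat (m choose k) * bernpoly (n - 1 + k) x * bernpoly (m - k) z)
      - of_nat m * (-1) ^ n * (\<Sum>k=0..n. of_nat (n choose k) * bernpoly (m - 1 + k) y * bernpoly (n - k) z)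
    = of_nat n * bernpoly (n - 1) x * bernpoly m y - of_nat m * bernpoly n x * bernpoly (m - 1) y"
  using arg_cong [OF bernpoly_bernpoly_egf2_identity [OF assms], of "\<lambda>F. egf2_coeff F m n"]
  by (simp only: egf2_coeff_simps left_diff_distrib bernpoly_reflect eulpoly_reflect) (simp add: mult_ac)

section \<open>Moving along the plane \<open>x + y + z = 1\<close>\<close>

definition appell_poly :: "(nat \<Rightarrow> complex \<Rightarrow> complex) \<Rightarrow> nat \<Rightarrow> complex \<Rightarrow> complex \<Rightarrow> complex poly" where
  "appell_poly f N x \<sigma> = (\<Sum>j\<le>N. monom (of_nat (N choose j) * \<sigma> ^ j * f (N - j) x) j)"

lemma coeff_appell_poly [simp]:
  "coeff (appell_poly f N x \<sigma>) j = of_nat (N choose j) * \<sigma> ^ j * f (N - j) x"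
  by (simp add: appell_poly_def coeff_sum coeff_monom binomial_eq_0)

lemma poly_appell_poly:
  assumes "\<And>x w. egf (\<lambda>n. f n (x + w)) = fps_exp w * egf (\<lambda>n. f n x)"
  shows "poly (appell_poly f N x \<sigma>) w = f N (x + \<sigma> * w)"
proof -
  have "f N (x + \<sigma> * w) / fact N = (fps_exp (\<sigma> * w) * egf (\<lambda>n. f n x)) $ N"
    by (simp flip: assms)
  also have "\<dots> = (\<Sum>j=0..N. (\<sigma> * w) ^ j / fact j * (f (N - j) x / fact (N - j)))"
    by (simp add: fps_mult_nth)
  finally have "f N (x + \<sigma> * w) = (\<Sum>j\<le>N. of_nat (N choose j) * \<sigma> ^ j * f (N - j) x * w ^ j)"
    by (simp add: atMost_atLeast0 sum_distrib_left binomial_fact field_simps power_mult_distrib)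
  then show ?thesis
    by (simp add: appell_poly_def poly_sum poly_monom)
qed

lemma poly_appell_poly_bernpoly [simp]:
  "poly (appell_poly bernpoly N x \<sigma>) w = bernpoly N (x + \<sigma> * w)"
  using egf_bernpoly_shift by (rule poly_appell_poly)

lemma poly_appell_poly_eulpoly [simp]:
  "poly (appell_poly eulpoly N x \<sigma>) w = eulpoly N (x + \<sigma> * w)"
  using egf_eulpoly_shift by (rule poly_appell_poly)

lemma pderiv_appell_poly:
  "pderiv (appell_poly f N x \<sigma>) = smult (of_nat N * \<sigma>) (appell_poly f (N - 1) x \<sigma>)"
proof (rule poly_eqI)
  fix j
  have "Suc j * (N choose Suc j) = N * (N - 1 choose j)"
  proof (cases N)
    case (Suc M)
    then show ?thesis
      by (simp only: Suc_times_binomial diff_Suc_1)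
  qed simp
  then have "of_nat (Suc j) * of_nat (N choose Suc j) = (of_nat N * of_nat (N - 1 choose j) :: complex)"
    by (metis of_nat_mult)
  moreover have "N - Suc j = N - 1 - j"
    by simp
  ultimately show "coeff (pderiv (appell_poly f N x \<sigma>)) j = coeff (smult (of_nat N * \<sigma>) (appell_poly f (N - 1) x \<sigma>)) j"
    by (simp add: coeff_pderiv mult_ac)
qed

lemma coeff_appell_poly_mult:
  assumes "l \<le> n"
  shows "coeff (appell_poly f n x \<sigma> * appell_poly g m y \<tau>) l
    = (\<Sum>k=0..l. of_nat (n choose (l - k)) * of_nat (m choose k) * \<sigma> ^ (l - k) * \<tau> ^ k
        * f (n - l + k) x * g (m - k) y)"
proof -
  have "coeff (appell_poly f n x \<sigma> * appell_poly g m y \<tau>) l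
      = (\<Sum>k=0..l. of_nat (n choose (l - k)) * \<sigma> ^ (l - k) * f (n - (l - k)) x
          * (of_nat (m choose k) * \<tau> ^ k * g (m - k) y))"
    unfolding coeff_mult atMost_atLeast0
    by (subst sum.atLeastAtMost_rev [of _ 0 l, simplified]) simp
  also have "\<dots> = (\<Sum>k=0..l. of_nat (n choose (l - k)) * of_nat (m choose k) * \<sigma> ^ (l - k) * \<tau> ^ k
        * f (n - l + k) x * g (m - k) y)"
  proof (rule sum.cong [OF refl])
    fix k
    assume "k \<in> {0..l}"
    then have "n - (l - k) = n - l + k"
      using assms by simp
    then show "of_nat (n choose (l - k)) * \<sigma> ^ (l - k) * f (n - (l - k)) x * (of_nat (m choose k) * \<tau> ^ k * g (m - k) y)
        = of_nat (n choose (l - k)) * of_nat (m choose k) * \<sigma> ^ (l - k) * \<tau> ^ k * f (n - l + k) x * g (m - k) y"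
      by (simp only: mult_ac)
  qed
  finally show ?thesis .
qed

lemma neg_one_power_diff:
  assumes "l \<le> n"
  shows "(-1::'a::ring_1) ^ (n - l) = (-1) ^ n * (-1) ^ l"
  using assms by (auto simp: minus_one_power_iff)

lemma neg_one_power_int_diff: "(-1::'a::field) powi (int n - int l - 1) = - ((-1) ^ n * (-1) ^ l)"
  by (auto simp: power_int_minus_left minus_one_power_iff even_diff)

lemma bernpoly_eulpoly_sum_identity1:
  assumes "0 < l" "l \<le> m" "l \<le> n" "x + y + z = 1"
  shows "(-1) ^ m * (\<Sum>k=0..m. of_nat (m choose k) * of_nat ((n + k) choose (l - 1))
        * bernpoly (n - l + k + 1) x * eulpoly (m - k) z)
    + (-1) ^ (n - l) * (\<Sum>k=0..n. of_nat (n choose k) * of_nat ((m + k) choose (l - 1))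
        * bernpoly (m - l + k + 1) y * eulpoly (n - k) z)
    = - (of_nat l / 2) * (\<Sum>k=0..l. (-1) ^ k * of_nat (m choose k) * of_nat (n choose (l - k))
        * eulpoly (n - l + k) x * eulpoly (m - k) y)"
proof -
  define P where "P = smult 2 (smult ((-1) ^ m) (\<Sum>k=0..m. smult (of_nat (m choose k) * eulpoly (m - k) z)
        (appell_poly bernpoly (n + k) x 1))
      - smult ((-1) ^ n) (\<Sum>k=0..n. smult (of_nat (n choose k) * eulpoly (n - k) z)
        (appell_poly bernpoly (m + k) y (-1))))"
  have "P = - pderiv (appell_poly eulpoly n x 1 * appell_poly eulpoly m y (-1))"
  proof (rule poly_ext)
    fix w
    have "poly P w
        = 2 * ((-1) ^ m * (\<Sum>k=0..m. of_nat (m choose k) * bernpoly (n + k) (x + w) * eulpoly (m - k) z)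
        - (-1) ^ n * (\<Sum>k=0..n. of_nat (n choose k) * bernpoly (m + k) (y - w) * eulpoly (n - k) z))"
      by (simp add: P_def poly_sum sum_distrib_left mult_ac)
    also have "\<dots> = of_nat m * eulpoly n (x + w) * eulpoly (m - 1) (y - w)
        - of_nat n * eulpoly (n - 1) (x + w) * eulpoly m (y - w)"
      by (rule bernpoly_eulpoly_sum_identity1_base) (use assms in simp)
    also have "\<dots> = poly (- pderiv (appell_poly eulpoly n x 1 * appell_poly eulpoly m y (-1))) w"
      by (simp add: pderiv_mult pderiv_appell_poly algebra_simps)
    finally show "poly P w = poly (- pderiv (appell_poly eulpoly n x 1 * appell_poly eulpoly m y (-1))) w" .
  qed
  then have "coeff P (l - 1) = coeff (- pderiv (appell_poly eulpoly n x 1 * appell_poly eulpoly m y (-1))) (l - 1)"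
    by simp
  moreover have "(-1::complex) ^ (n - l) = - ((-1) ^ n * (-1) ^ (l - 1))"
    using assms by (cases l) (simp_all add: neg_one_power_diff)
  ultimately have "2 * ((-1) ^ m * (\<Sum>k=0..m. of_nat (m choose k) * of_nat ((n + k) choose (l - 1))
        * bernpoly (n - l + k + 1) x * eulpoly (m - k) z)
      + (-1) ^ (n - l) * (\<Sum>k=0..n. of_nat (n choose k) * of_nat ((m + k) choose (l - 1))
        * bernpoly (m - l + k + 1) y * eulpoly (n - k) z))
      = - (of_nat l * (\<Sum>k=0..l. (-1) ^ k * of_nat (m choose k) * of_nat (n choose (l - k))
        * eulpoly (n - l + k) x * eulpoly (m - k) y))"
    using assms by (simp add: P_def coeff_sum coeff_pderiv coeff_appell_poly_mult sum_distrib_left sum_negf Suc_diff_le mult_ac)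
  then show ?thesis
    by (simp add: field_simps)
qed

lemma bernpoly_eulpoly_sum_identity2:
  assumes "0 < m" "l \<le> m" "l \<le> n" "x + y + z = 1"
  shows "(\<Sum>k=0..l. (-1) ^ k * of_nat (m choose k) * of_nat (n choose (l - k))
        * bernpoly (m - k) x * eulpoly (n - l + k) z)
    - (-1) ^ m * (\<Sum>k=0..m. of_nat (m choose k) * of_nat ((n + k) choose l)
        * bernpoly (m - k) y * eulpoly (n - l + k) z)
    = (-1) powi (int n - int l - 1) * (of_nat m / 2)
      * (\<Sum>k=(if l = m then 1 else 0)..n. of_nat (n choose k) * of_nat ((m + k - 1) choose l)
          * eulpoly (n - k) y * eulpoly (m + k - l - 1) x)"
proof -
  define P where "P = smult 2 (appell_poly eulpoly n z 1 * appell_poly bernpoly m x (-1)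
      - smult ((-1) ^ m) (\<Sum>k=0..m. smult (of_nat (m choose k) * bernpoly (m - k) y)
        (appell_poly eulpoly (n + k) z 1)))"
  define Q where "Q = smult (- ((-1) ^ n * of_nat m)) (\<Sum>k=0..n. smult (of_nat (n choose k) * eulpoly (n - k) y)
        (appell_poly eulpoly (m + k - 1) x (-1)))"
  have "P = Q"
  proof (rule poly_ext)
    fix w
    have index: "m - 1 + k = m + k - 1" for k
      using assms by simp
    have "poly P w = 2 * (bernpoly m (x - w) * eulpoly n (z + w)
        - (-1) ^ m * (\<Sum>k=0..m. of_nat (m choose k) * bernpoly (m - k) y * eulpoly (n + k) (z + w)))"
      by (simp add: P_def poly_sum sum_distrib_left mult_ac)
    also have "\<dots> = - ((-1) ^ n * of_nat m
        * (\<Sum>k=0..n. of_nat (n choose k) * eulpoly (n - k) y * eulpoly (m - 1 + k) (x - w)))"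
      by (rule bernpoly_eulpoly_sum_identity2_base) (use assms in \<open>simp add: algebra_simps\<close>)
    also have "\<dots> = poly Q w"
      using index by (simp add: Q_def poly_sum sum_distrib_left mult_ac)
    finally show "poly P w = poly Q w" .
  qed
  then have "coeff P l = coeff Q l"
    by simp
  then have "2 * ((\<Sum>k=0..l. (-1) ^ k * of_nat (m choose k) * of_nat (n choose (l - k))
        * bernpoly (m - k) x * eulpoly (n - l + k) z)
      - (-1) ^ m * (\<Sum>k=0..m. of_nat (m choose k) * of_nat ((n + k) choose l)
        * bernpoly (m - k) y * eulpoly (n - l + k) z))
      = - ((-1) ^ n * (-1) ^ l) * of_nat m * (\<Sum>k=0..n. of_nat (n choose k) * of_nat ((m + k - 1) choose l)
          * eulpoly (n - k) y * eulpoly (m + k - l - 1) x)"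
    using assms by (simp add: P_def Q_def coeff_sum coeff_appell_poly_mult sum_distrib_left sum_negf mult_ac)
  moreover have "(\<Sum>k=(if l = m then 1 else 0)..n. of_nat (n choose k) * of_nat ((m + k - 1) choose l)
          * eulpoly (n - k) y * eulpoly (m + k - l - 1) x)
      = (\<Sum>k=0..n. of_nat (n choose k) * of_nat ((m + k - 1) choose l)
          * eulpoly (n - k) y * eulpoly (m + k - l - 1) x)"
    using assms by (simp add: sum.atLeast_Suc_atMost)
  ultimately show ?thesis
    unfolding neg_one_power_int_diff by (simp add: field_simps)
qed

lemma bernpoly_bernpoly_sum_identity:
  assumes "0 < l" "l \<le> m" "l \<le> n" "x + y + z = 1"
  shows "(-1) ^ m / of_nat m * (\<Sum>k=0..m. of_nat (m choose k) * of_nat ((n + k - 1) choose (l - 1))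
        * bernpoly (n - l + k) x * bernpoly (m - k) z)
    + (-1) ^ l * ((-1) ^ n / of_nat n) * (\<Sum>k=0..n. of_nat (n choose k) * of_nat ((m + k - 1) choose (l - 1))
        * bernpoly (m - l + k) y * bernpoly (n - k) z)
    = of_nat l / (of_nat m * of_nat n) * (\<Sum>k=0..l. (-1) ^ k * of_nat (m choose k) * of_nat (n choose (l - k))
        * bernpoly (n - l + k) x * bernpoly (m - k) y)"
proof -
  define P where "P = smult (of_nat n * (-1) ^ m) (\<Sum>k=0..m. smult (of_nat (m choose k) * bernpoly (m - k) z)
        (appell_poly bernpoly (n + k - 1) x 1))
      - smult (of_nat m * (-1) ^ n) (\<Sum>k=0..n. smult (of_nat (n choose k) * bernpoly (n - k) z)
        (appell_poly bernpoly (m + k - 1) y (-1)))"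
  have "P = pderiv (appell_poly bernpoly n x 1 * appell_poly bernpoly m y (-1))"
  proof (rule poly_ext)
    fix w
    have index: "n - 1 + k = n + k - 1" "m - 1 + k = m + k - 1" for k
      using assms by auto
    have "poly P w
        = of_nat n * (-1) ^ m * (\<Sum>k=0..m. of_nat (m choose k) * bernpoly (n - 1 + k) (x + w) * bernpoly (m - k) z)
        - of_nat m * (-1) ^ n * (\<Sum>k=0..n. of_nat (n choose k) * bernpoly (m - 1 + k) (y - w) * bernpoly (n - k) z)"
      using index by (simp add: P_def poly_sum sum_distrib_left mult_ac)
    also have "\<dots> = of_nat n * bernpoly (n - 1) (x + w) * bernpoly m (y - w)
        - of_nat m * bernpoly n (x + w) * bernpoly (m - 1) (y - w)"
      by (rule bernpoly_bernpoly_sum_identity_base) (use assms in simp)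
    also have "\<dots> = poly (pderiv (appell_poly bernpoly n x 1 * appell_poly bernpoly m y (-1))) w"
      by (simp add: pderiv_mult pderiv_appell_poly algebra_simps)
    finally show "poly P w = poly (pderiv (appell_poly bernpoly n x 1 * appell_poly bernpoly m y (-1))) w" .
  qed
  then have "coeff P (l - 1) = coeff (pderiv (appell_poly bernpoly n x 1 * appell_poly bernpoly m y (-1))) (l - 1)"
    by simp
  moreover have "(-1::complex) ^ l = - ((-1) ^ (l - 1))"
    using \<open>0 < l\<close> by (cases l) simp_all
  ultimately have "of_nat n * (-1) ^ m * (\<Sum>k=0..m. of_nat (m choose k) * of_nat ((n + k - 1) choose (l - 1))
        * bernpoly (n - l + k) x * bernpoly (m - k) z)
      + of_nat m * ((-1) ^ l * (-1) ^ n) * (\<Sum>k=0..n. of_nat (n choose k) * of_nat ((m + k - 1) choose (l - 1))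
        * bernpoly (m - l + k) y * bernpoly (n - k) z)
      = of_nat l * (\<Sum>k=0..l. (-1) ^ k * of_nat (m choose k) * of_nat (n choose (l - k))
        * bernpoly (n - l + k) x * bernpoly (m - k) y)"
    using assms by (simp add: P_def coeff_sum coeff_pderiv coeff_appell_poly_mult sum_distrib_left sum_negf mult_ac)
  then show ?thesis
    using assms by (simp add: field_simps)
qed

theorem theorem1p2:
  fixes l m n :: nat and x y z :: complex
  assumes "0 < l" "0 < m" "0 < n" "l \<le> m" "l \<le> n" "x + y + z = 1"
  shows
   "((-1) ^ m * (\<Sum>k=0..m. of_nat (m choose k) * of_nat ((n + k) choose (l - 1))
        * bernpoly (n - l + k + 1) x * eulpoly (m - k) z)
    + (-1) ^ (n - l) * (\<Sum>k=0..n. of_nat (n choose k) * of_nat ((m + k) choose (l - 1))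
        * bernpoly (m - l + k + 1) y * eulpoly (n - k) z)
    = - (of_nat l / 2) * (\<Sum>k=0..l. (-1) ^ k * of_nat (m choose k) * of_nat (n choose (l - k))
        * eulpoly (n - l + k) x * eulpoly (m - k) y))
   \<and>
   ((\<Sum>k=0..l. (-1) ^ k * of_nat (m choose k) * of_nat (n choose (l - k))
        * bernpoly (m - k) x * eulpoly (n - l + k) z)
    - (-1) ^ m * (\<Sum>k=0..m. of_nat (m choose k) * of_nat ((n + k) choose l)
        * bernpoly (m - k) y * eulpoly (n - l + k) z)
    = (-1) powi (int n - int l - 1) * (of_nat m / 2)
      * (\<Sum>k=(if l = m then 1 else 0)..n. of_nat (n choose k) * of_nat ((m + k - 1) choose l)
          * eulpoly (n - k) y * eulpoly (m + k - l - 1) x))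
   \<and>
   ((-1) ^ m / of_nat m * (\<Sum>k=0..m. of_nat (m choose k) * of_nat ((n + k - 1) choose (l - 1))
        * bernpoly (n - l + k) x * bernpoly (m - k) z)
    + (-1) ^ l * ((-1) ^ n / of_nat n) * (\<Sum>k=0..n. of_nat (n choose k) * of_nat ((m + k - 1) choose (l - 1))
        * bernpoly (m - l + k) y * bernpoly (n - k) z)
    = of_nat l / (of_nat m * of_nat n) * (\<Sum>k=0..l. (-1) ^ k * of_nat (m choose k) * of_nat (n choose (l - k))
        * bernpoly (n - l + k) x * bernpoly (m - k) y))"
  using bernpoly_eulpoly_sum_identity1 [OF assms(1,4,5,6)] bernpoly_eulpoly_sum_identity2 [OF assms(2,4,5,6)]
    bernpoly_bernpoly_sum_identity [OF assms(1,4,5,6)]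
  by blast

end
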